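(* Let $G$ be a tree, let $P$ and $T$ be valid search trees on $G$. Then every node $v$ of $T$ is a transition point (with respect to $T$) of at most one node $y$ of $P$.
   Context: Search tree on a tree: a rooted tree $T$ is a valid search tree on an unrooted tree $G$ if the root $r$ of $T$ is a vertex of $G$ and the subtrees of $T\setminus r$ are valid search trees on the connected components of $G\setminus r$. For a node $y$ of $P$, $P(y)$ denotes the subtree of $P$ rooted at $y$ (and its vertex set). Transition points: let $y$ be a non-leaf node of $P$ with children $y_1,\dots,y_d$, and regard $y$ itself as belonging to the part $P(y_1)$ (i.e. the parts are $\{y\}\cup P(y_1), P(y_2),\dots,P(y_d)$). For $i=1,\dots,d$ let $\ell_i$ be the node of the $i$-th part having smallest depth in $T$. Let $\ell_{i^*}$ be the one of smallest depth in $T$ among $\ell_1,\dots,\ell_d$ (it is the lowest common ancestor in $T$ of all nodes of $P(y)$), called the dominating node of $P(y)$ in $T$. For each $i\neq i^*$, the node $\ell_i$ is called the transition point of $y$ for $P(y_i)$. *)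

theory Defs
  imports Main
begin

definition reach_in :: "('a \<Rightarrow> 'a \<Rightarrow> bool) \<Rightarrow> 'a set \<Rightarrow> 'a \<Rightarrow> 'a \<Rightarrow> bool" where
  "reach_in E S = (\<lambda>a b. E a b \<and> a \<in> S \<and> b \<in> S)\<^sup>*\<^sup>*"

definition comps :: "('a \<Rightarrow> 'a \<Rightarrow> bool) \<Rightarrow> 'a set \<Rightarrow> 'a set set" where
  "comps E S = {{y \<in> S. reach_in E S x y} | x. x \<in> S}"

definition is_tree :: "'a set \<Rightarrow> ('a \<Rightarrow> 'a \<Rightarrow> bool) \<Rightarrow> bool" where
  "is_tree V E \<longleftrightarrow> finite V \<and> V \<noteq> {}
     \<and> (\<forall>x y. E x y \<longrightarrow> x \<in> V \<and> y \<in> V \<and> x \<noteq> y \<and> E y x)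
     \<and> (\<forall>x\<in>V. \<forall>y\<in>V. reach_in E V x y)
     \<and> \<not> (\<exists>cs. length cs \<ge> 3 \<and> distinct cs \<and> set cs \<subseteq> V
              \<and> (\<forall>i. Suc i < length cs \<longrightarrow> E (cs ! i) (cs ! Suc i))
              \<and> E (last cs) (hd cs))"

datatype 'a rtree = Node (root: 'a) (kids: "'a rtree list")

fun vs :: "'a rtree \<Rightarrow> 'a set" where
  "vs (Node r ts) = insert r (\<Union>t\<in>set ts. vs t)"

fun subtrees :: "'a rtree \<Rightarrow> 'a rtree set" where
  "subtrees (Node r ts) = insert (Node r ts) (\<Union>t\<in>set ts. subtrees t)"

inductive search_tree :: "('a \<Rightarrow> 'a \<Rightarrow> bool) \<Rightarrow> 'a set \<Rightarrow> 'a rtree \<Rightarrow> bool"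
  for E where
  "\<lbrakk> r \<in> S; distinct (map vs ts); set (map vs ts) = comps E (S - {r});
     \<forall>t\<in>set ts. search_tree E (vs t) t \<rbrakk> \<Longrightarrow> search_tree E S (Node r ts)"

inductive at_depth :: "'a rtree \<Rightarrow> 'a \<Rightarrow> nat \<Rightarrow> bool" where
  "at_depth (Node r ts) r 0"
| "\<lbrakk> t \<in> set ts; at_depth t v n \<rbrakk> \<Longrightarrow> at_depth (Node r ts) v (Suc n)"

definition depth :: "'a rtree \<Rightarrow> 'a \<Rightarrow> nat" where
  "depth T v = (LEAST n. at_depth T v n)"

definition lowest :: "'a rtree \<Rightarrow> 'a set \<Rightarrow> 'a \<Rightarrow> bool" where
  "lowest T A v \<longleftrightarrow> v \<in> A \<and> (\<forall>w\<in>A. depth T v \<le> depth T w)"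

fun parts :: "'a rtree \<Rightarrow> 'a set list" where
  "parts (Node y []) = []"
| "parts (Node y (c # cs)) = insert y (vs c) # map vs cs"

text \<open>v is a transition point (w.r.t. T) of the node y of P: v is the
smallest-depth node l_i of some part i, and i is not the dominating index,
i.e. some other part's smallest-depth node l_j is strictly shallower.\<close>
definition transition_point :: "'a rtree \<Rightarrow> 'a rtree \<Rightarrow> 'a \<Rightarrow> 'a \<Rightarrow> bool" where
  "transition_point T P y v \<longleftrightarrow>
     (\<exists>c\<in>subtrees P. root c = y \<and> kids c \<noteq> [] \<and>
        (\<exists>i<length (parts c). lowest T (parts c ! i) v \<and>
           (\<exists>j<length (parts c). \<exists>w. lowest T (parts c ! j) w \<and> depth T w < depth T v)))"

end

theory Submission
  imports Defs
begin

text \<open>Only the shape of P matters: the subtrees of a search tree are laminar (two of them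
sharing a vertex are nested), and a proper subtree c of a node lies entirely inside one part
of that node. Hence if v is the shallowest node (in T) of some part of both nodes y and y',
with P(y') strictly below P(y), then v is the shallowest node of all of P(y'), so no part of
P(y') has a strictly shallower representative and v cannot be a transition point of y'.
No property of T other than its depth function is needed.\<close>

fun laminar :: "'a rtree \<Rightarrow> bool" where
  "laminar (Node r ts) \<longleftrightarrow> (\<forall>t\<in>set ts. r \<notin> vs t)
     \<and> (\<forall>i<length ts. \<forall>j<length ts. i \<noteq> j \<longrightarrow> vs (ts!i) \<inter> vs (ts!j) = {})
     \<and> (\<forall>t\<in>set ts. laminar t)"

definition transition_in :: "'a rtree \<Rightarrow> 'a rtree \<Rightarrow> 'a \<Rightarrow> bool" where
  "transition_in T c v \<longleftrightarrow>
     (\<exists>i<length (parts c). lowest T (parts c ! i) v \<and>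
        (\<exists>j<length (parts c). \<exists>w. lowest T (parts c ! j) w \<and> depth T w < depth T v))"

lemma transition_point_iff:
  "transition_point T P y v \<longleftrightarrow>
     (\<exists>c\<in>subtrees P. root c = y \<and> kids c \<noteq> [] \<and> transition_in T c v)"
  unfolding transition_point_def transition_in_def ..

lemma comps_disjoint:
  assumes "symp E" "A \<in> comps E S" "B \<in> comps E S" "A \<noteq> B"
  shows "A \<inter> B = {}"
proof -
  have sym: "symp (reach_in E S)"
    unfolding reach_in_def using assms(1) by (auto intro: symp_rtranclp sympI dest: sympD)
  obtain x y where A: "A = {u \<in> S. reach_in E S x u}" and B: "B = {u \<in> S. reach_in E S y u}"
    using assms(2,3) unfolding comps_def by blast
  have "A = B" if "z \<in> A" "z \<in> B" for z
  proof -
    have "reach_in E S x y" and "reach_in E S y x"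
      using that A B sym unfolding reach_in_def by (auto intro: rtranclp_trans dest: sympD)
    then show ?thesis unfolding A B reach_in_def by (auto intro: rtranclp_trans)
  qed
  with assms(4) show ?thesis by blast
qed

lemma search_tree_laminar:
  assumes "search_tree E S t" "symp E"
  shows "laminar t"
  using assms(1)
proof induction
  case (1 r S ts)
  have "r \<notin> vs t" if "t \<in> set ts" for t
    using that 1(3) unfolding comps_def by auto
  moreover have "vs (ts!i) \<inter> vs (ts!j) = {}"
    if "i < length ts" "j < length ts" "i \<noteq> j" for i j
  proof (rule comps_disjoint[OF assms(2)])
    show "vs (ts!i) \<in> comps E (S - {r})" "vs (ts!j) \<in> comps E (S - {r})"
      using 1(3) that by (metis list.set_map image_eqI nth_mem)+
    show "vs (ts!i) \<noteq> vs (ts!j)"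
      using 1(2) that by (metis length_map nth_eq_iff_index_eq nth_map)
  qed
  ultimately show ?case using 1(4) by auto
qed

lemma vs_subtrees_subset: "c \<in> subtrees t \<Longrightarrow> vs c \<subseteq> vs t"
  by (induction t rule: subtrees.induct) auto

lemma laminar_subtrees: "laminar t \<Longrightarrow> c \<in> subtrees t \<Longrightarrow> laminar c"
  by (induction t rule: subtrees.induct) auto

lemma laminar_subtrees_nested:
  "laminar t \<Longrightarrow> c1 \<in> subtrees t \<Longrightarrow> c2 \<in> subtrees t \<Longrightarrow> v \<in> vs c1 \<Longrightarrow> v \<in> vs c2
   \<Longrightarrow> c1 \<in> subtrees c2 \<or> c2 \<in> subtrees c1"
proof (induction t arbitrary: c1 c2 rule: subtrees.induct)
  case (1 r ts)
  show ?case
  proof (cases "c1 = Node r ts \<or> c2 = Node r ts")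
    case True
    then show ?thesis using 1 by auto
  next
    case False
    then obtain i j where ij: "i < length ts" "j < length ts"
      "c1 \<in> subtrees (ts!i)" "c2 \<in> subtrees (ts!j)"
      using 1(3,4) by (auto simp: in_set_conv_nth)
    then have "v \<in> vs (ts!i) \<inter> vs (ts!j)" using 1(5,6) vs_subtrees_subset by blast
    then have "i = j" using 1(2) ij(1,2) by auto
    then show ?thesis using 1(1)[of "ts!j" c1 c2] 1(2,5,6) ij by auto
  qed
qed

lemma length_parts: "length (parts (Node y ts)) = length ts"
  by (cases ts) auto

lemma nth_parts:
  "i < length ts \<Longrightarrow> vs (ts!i) \<subseteq> parts (Node y ts) ! i \<and> parts (Node y ts) ! i \<subseteq> insert y (vs (ts!i))"
  by (cases ts; cases i) auto

lemma parts_subset_vs: "i < length (parts c) \<Longrightarrow> parts c ! i \<subseteq> vs c"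
proof (cases c)
  case (Node y ts)
  assume "i < length (parts c)"
  then have "i < length ts" using Node length_parts by metis
  then show ?thesis using nth_parts[of i ts y] Node by (auto dest: nth_mem)
qed

lemma proper_subtree_within_part:
  assumes "laminar c" "d \<in> subtrees c" "d \<noteq> c"
    and "i < length (parts c)" "v \<in> vs d" "v \<in> parts c ! i"
  shows "vs d \<subseteq> parts c ! i"
proof (cases c)
  case (Node y ts)
  then obtain m where m: "m < length ts" "d \<in> subtrees (ts!m)"
    using assms(2,3) by (auto simp: in_set_conv_nth)
  have i: "i < length ts" using assms(4) Node length_parts by metis
  have d_m: "vs d \<subseteq> vs (ts!m)" using vs_subtrees_subset m(2) .
  moreover have "y \<notin> vs (ts!m)" using assms(1) Node m(1) by auto
  ultimately have "v \<in> vs (ts!i)" using nth_parts[OF i, of y] assms(5,6) Node by auto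
  moreover have "v \<in> vs (ts!m)" using d_m assms(5) by blast
  ultimately have "i = m" using assms(1) Node m(1) i by auto
  then show ?thesis using d_m nth_parts[OF i, of y] Node by auto
qed

lemma transition_in_not_below:
  assumes "laminar c" "d \<in> subtrees c" "d \<noteq> c"
    and "i < length (parts c)" "lowest T (parts c ! i) v"
  shows "\<not> transition_in T d v"
proof
  assume "transition_in T d v"
  then obtain k j w where k: "k < length (parts d)" "lowest T (parts d ! k) v"
    and j: "j < length (parts d)" "lowest T (parts d ! j) w" and shallower: "depth T w < depth T v"
    unfolding transition_in_def by blast
  have "v \<in> vs d" using k parts_subset_vs unfolding lowest_def by blast
  then have "vs d \<subseteq> parts c ! i"
    using proper_subtree_within_part[OF assms(1-4)] assms(5) unfolding lowest_def by blast
  moreover have "w \<in> vs d" using j parts_subset_vs unfolding lowest_def by blast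
  ultimately have "depth T v \<le> depth T w" using assms(5) unfolding lowest_def by blast
  with shallower show False by simp
qed

lemma laminar_transition_in_unique:
  assumes "laminar P" "c1 \<in> subtrees P" "c2 \<in> subtrees P"
    and "transition_in T c1 v" "transition_in T c2 v"
  shows "c1 = c2"
proof (rule ccontr)
  assume "c1 \<noteq> c2"
  have lowest_part: "\<exists>i<length (parts c). lowest T (parts c ! i) v \<and> v \<in> vs c"
    if "transition_in T c v" for c
    using that parts_subset_vs unfolding transition_in_def lowest_def by blast
  then have "c1 \<in> subtrees c2 \<or> c2 \<in> subtrees c1"
    using laminar_subtrees_nested[OF assms(1-3)] assms(4,5) by blast
  then show False
    using transition_in_not_below laminar_subtrees[OF assms(1)] lowest_part
      assms(2-5) \<open>c1 \<noteq> c2\<close> by metis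
qed

theorem mainTheorem2:
  fixes V :: "'a set" and E :: "'a \<Rightarrow> 'a \<Rightarrow> bool" and P T :: "'a rtree"
  assumes "is_tree V E"
    and "search_tree E V P"
    and "search_tree E V T"
    and "v \<in> vs T"
  shows "\<forall>y1 y2. transition_point T P y1 v \<and> transition_point T P y2 v \<longrightarrow> y1 = y2"
proof (intro allI impI)
  fix y1 y2
  assume "transition_point T P y1 v \<and> transition_point T P y2 v"
  then obtain c1 c2 where "c1 \<in> subtrees P" "root c1 = y1" "transition_in T c1 v"
    and "c2 \<in> subtrees P" "root c2 = y2" "transition_in T c2 v"
    unfolding transition_point_iff by blast
  moreover have "laminar P"
    using search_tree_laminar[OF assms(2)] assms(1) unfolding is_tree_def by (auto intro: sympI)
  ultimately show "y1 = y2" using laminar_transition_in_unique by metis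
qed

end
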